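(* The product of $\mathbf{PM}_k$ satisfies, for any $k$-packed matrices $M_1$ and $M_2$, $\mathbf{E}_{M_1} \cdot \mathbf{E}_{M_2} = \mathbf{E}_{\mathrm{ov}(M_1, M_2)}$ and $\mathbf{H}_{M_1} \cdot \mathbf{H}_{M_2} = \mathbf{H}_{\mathrm{un}(M_1, M_2)}$.
   Context: Let $k \geq 1$, $A_k := \{0,1,\dots,k\}$. A $k$-packed matrix of size $n$ is an $n\times n$ matrix with entries in $A_k$ with at least one nonzero entry in each row and column. $\mathbf{PM}_k$ has fundamental basis $(\mathbf{F}_M)$ indexed by $k$-packed matrices and product $\mathbf{F}_{M_1}\cdot\mathbf{F}_{M_2} = \sum_{M \in \mathrm{Sh}_c(M_1,M_2)} \mathbf{F}_M$, where, for sizes $n_1, n_2$, $\mathrm{Sh}_c(M_1,M_2)$ is the set of all matrices obtained by shuffling the columns of $M_1$ with an $n_2 \times n_1$ zero block placed below it, with the columns of $M_2$ with an $n_1 \times n_2$ zero block placed above it. $\mathrm{ov}(M_1,M_2) := \begin{pmatrix} M_1 & 0 \\ 0 & M_2\end{pmatrix}$ and $\mathrm{un}(M_1,M_2) := \begin{pmatrix} 0 & M_1 \\ M_2 & 0 \end{pmatrix}$. Define $\to$ on $k$-packed matrices of size $n$: $M_1 \to M_2$ if there is $i \in [n-1]$ such that, with $s$ the number of $0$ ending the $i$th column of $M_1$ and $p$ the number of $0$ starting its $(i+1)$st column, $s + p \geq n$ and $M_2$ is obtained by exchanging columns $i$ and $i+1$ of $M_1$. $\leq_{\mathrm{M}}$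 is the reflexive and transitive closure of $\to$. The elementary and homogeneous elements are $\mathbf{E}_M := \sum_{M \leq_{\mathrm{M}} M'} \mathbf{F}_{M'}$ and $\mathbf{H}_M := \sum_{M' \leq_{\mathrm{M}} M} \mathbf{F}_{M'}$. *)

theory Defs
  imports Main
begin

text \<open>A square matrix of size n is represented as the list of its n columns,
  each column being a list of length n (entry i of column j is the (i,j) entry).\<close>

type_synonym pmat = "nat list list"

definition packed :: "nat \<Rightarrow> pmat \<Rightarrow> bool" where
  "packed k M \<longleftrightarrow>
     (\<forall>c \<in> set M. length c = length M \<and> (\<forall>x \<in> set c. x \<le> k) \<and> (\<exists>x \<in> set c. x \<noteq> 0)) \<and>
     (\<forall>i < length M. \<exists>c \<in> set M. c ! i \<noteq> 0)"

definition pad_below :: "nat \<Rightarrow> nat list \<Rightarrow> nat list" where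
  "pad_below n c = c @ replicate n 0"

definition pad_above :: "nat \<Rightarrow> nat list \<Rightarrow> nat list" where
  "pad_above n c = replicate n 0 @ c"

definition Sh_c :: "pmat \<Rightarrow> pmat \<Rightarrow> pmat set" where
  "Sh_c M1 M2 = shuffles (map (pad_below (length M2)) M1) (map (pad_above (length M1)) M2)"

definition ov :: "pmat \<Rightarrow> pmat \<Rightarrow> pmat" where
  "ov M1 M2 = map (pad_below (length M2)) M1 @ map (pad_above (length M1)) M2"

definition un :: "pmat \<Rightarrow> pmat \<Rightarrow> pmat" where
  "un M1 M2 = map (pad_above (length M1)) M2 @ map (pad_below (length M2)) M1"

text \<open>Elements of PM_k (with coefficients in a commutative ring): coefficient functions
  on matrices; F M is the fundamental basis element.\<close>
definition F :: "pmat \<Rightarrow> pmat \<Rightarrow> 'a::comm_ring_1" where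
  "F M = (\<lambda>X. if X = M then 1 else 0)"

text \<open>The product, extended bilinearly from F_{M1} * F_{M2} = sum over Sh_c(M1,M2) of F_M
  (for finitely supported elements).\<close>
definition pm_mult :: "(pmat \<Rightarrow> 'a::comm_ring_1) \<Rightarrow> (pmat \<Rightarrow> 'a) \<Rightarrow> (pmat \<Rightarrow> 'a)" where
  "pm_mult f g = (\<lambda>X. \<Sum>p \<in> {(A, B). f A \<noteq> 0 \<and> g B \<noteq> 0}.
       f (fst p) * g (snd p) * (\<Sum>M \<in> Sh_c (fst p) (snd p). F M X))"

definition trailing_zeros :: "nat list \<Rightarrow> nat" where
  "trailing_zeros c = length (takeWhile (\<lambda>x. x = 0) (rev c))"

definition leading_zeros :: "nat list \<Rightarrow> nat" where
  "leading_zeros c = length (takeWhile (\<lambda>x. x = 0) c)"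

text \<open>The elementary move M1 -> M2 on k-packed matrices (columns indexed from 0 here,
  so columns i and i+1 with i+1 < n).\<close>
definition move :: "nat \<Rightarrow> pmat \<Rightarrow> pmat \<Rightarrow> bool" where
  "move k M1 M2 \<longleftrightarrow> packed k M1 \<and>
     (\<exists>i. Suc i < length M1 \<and>
          trailing_zeros (M1 ! i) + leading_zeros (M1 ! Suc i) \<ge> length M1 \<and>
          M2 = M1[i := M1 ! Suc i, Suc i := M1 ! i])"

definition leM :: "nat \<Rightarrow> pmat \<Rightarrow> pmat \<Rightarrow> bool" where
  "leM k = (move k)\<^sup>*\<^sup>*"

definition E :: "nat \<Rightarrow> pmat \<Rightarrow> pmat \<Rightarrow> 'a::comm_ring_1" where
  "E k M = (\<lambda>X. \<Sum>M' \<in> {M'. leM k M M'}. F M' X)"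

definition H :: "nat \<Rightarrow> pmat \<Rightarrow> pmat \<Rightarrow> 'a::comm_ring_1" where
  "H k M = (\<lambda>X. \<Sum>M' \<in> {M'. leM k M' M \<and> packed k M'}. F M' X)"

end

theory Submission
  imports Defs
begin

text \<open>Call two adjacent columns exchangeable when the zeros ending the first and those
  starting the second cover a full column, so that the move \<open>\<rightarrow>\<close> may swap them. In a
  shuffle of \<open>M\<^sub>1\<close> (padded below) and \<open>M\<^sub>2\<close> (padded above), any column of the first block
  is exchangeable with any later column of the second block, whereas a column of the second
  block is never exchangeable with a later column of the first one. Hence every move applied to
  a shuffle either swaps two columns coming from different blocks, yielding another shuffle of
  the same pair, or performs a move inside one block. It follows that the matrices above
  \<open>ov(M\<^sub>1, M\<^sub>2)\<close> are exactly the shuffles of matrices above \<open>M\<^sub>1\<close> and \<open>M\<^sub>2\<close>, and the matrices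
  below \<open>un(M\<^sub>1, M\<^sub>2)\<close> exactly the shuffles of matrices below them. Since a shuffle determines
  its two blocks, each such matrix occurs once in the product, which gives both identities.\<close>

lemma leading_zeros_less_length: "\<exists>x\<in>set c. x \<noteq> 0 \<Longrightarrow> leading_zeros c < length c"
  unfolding leading_zeros_def by (induction c) auto

lemma trailing_zeros_less_length: "\<exists>x\<in>set c. x \<noteq> 0 \<Longrightarrow> trailing_zeros c < length c"
  using leading_zeros_less_length[of "rev c"]
  by (simp add: trailing_zeros_def leading_zeros_def)

lemma length_takeWhile_zero_replicate_append:
  "length (takeWhile (\<lambda>x. x = 0) (replicate n 0 @ c)) = n + length (takeWhile (\<lambda>x. x = 0) c)"
  by (induction n) auto

lemma leading_zeros_pad_above [simp]: "leading_zeros (pad_above n c) = n + leading_zeros c"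
  by (simp add: leading_zeros_def pad_above_def length_takeWhile_zero_replicate_append)

lemma trailing_zeros_pad_below [simp]: "trailing_zeros (pad_below n c) = n + trailing_zeros c"
  by (simp add: trailing_zeros_def pad_below_def length_takeWhile_zero_replicate_append)

lemma leading_zeros_pad_below:
  "\<exists>x\<in>set c. x \<noteq> 0 \<Longrightarrow> leading_zeros (pad_below n c) = leading_zeros c"
  by (auto simp: leading_zeros_def pad_below_def takeWhile_append1)

lemma trailing_zeros_pad_above:
  "\<exists>x\<in>set c. x \<noteq> 0 \<Longrightarrow> trailing_zeros (pad_above n c) = trailing_zeros c"
  by (auto simp: trailing_zeros_def pad_above_def takeWhile_append1)

definition exchangeable :: "nat \<Rightarrow> nat list \<Rightarrow> nat list \<Rightarrow> bool" where
  "exchangeable n a b \<longleftrightarrow> n \<le> trailing_zeros a + leading_zeros b"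

lemma exchangeable_pad_below_iff:
  "\<exists>x\<in>set b. x \<noteq> 0 \<Longrightarrow>
     exchangeable (n + m) (pad_below m a) (pad_below m b) \<longleftrightarrow> exchangeable n a b"
  by (simp add: exchangeable_def leading_zeros_pad_below)

lemma exchangeable_pad_above_iff:
  "\<exists>x\<in>set a. x \<noteq> 0 \<Longrightarrow>
     exchangeable (m + n) (pad_above m a) (pad_above m b) \<longleftrightarrow> exchangeable n a b"
  by (simp add: exchangeable_def trailing_zeros_pad_above)

lemma exchangeable_pad_below_pad_above: "exchangeable (n + m) (pad_below m a) (pad_above n b)"
  by (simp add: exchangeable_def)

lemma not_exchangeable_pad_above_pad_below:
  assumes "length a = m" "\<exists>x\<in>set a. x \<noteq> 0" "length b = n" "\<exists>x\<in>set b. x \<noteq> 0"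
  shows "\<not> exchangeable (n + m) (pad_above n a) (pad_below m b)"
  using trailing_zeros_less_length[of a] leading_zeros_less_length[of b] assms
  by (simp add: exchangeable_def trailing_zeros_pad_above leading_zeros_pad_below)

lemma move_iff_swap:
  "move k X Y \<longleftrightarrow> packed k X \<and>
     (\<exists>L a b R. X = L @ a # b # R \<and> Y = L @ b # a # R \<and> exchangeable (length X) a b)"
proof
  assume "move k X Y"
  then obtain i where p: "packed k X" and i: "Suc i < length X"
    and c: "exchangeable (length X) (X ! i) (X ! Suc i)"
    and Y: "Y = X[i := X ! Suc i, Suc i := X ! i]"
    unfolding move_def exchangeable_def by blast
  define L R where "L = take i X" and "R = drop (Suc (Suc i)) X"
  have X: "X = L @ X ! i # X ! Suc i # R"
    using i by (simp add: L_def R_def Cons_nth_drop_Suc)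
  have "Y = L @ X ! Suc i # X ! i # R"
    using i by (subst Y, subst X) (simp add: L_def list_update_append)
  with X p c show "packed k X \<and> (\<exists>L a b R. X = L @ a # b # R \<and> Y = L @ b # a # R
      \<and> exchangeable (length X) a b)" by blast
next
  assume "packed k X \<and> (\<exists>L a b R. X = L @ a # b # R \<and> Y = L @ b # a # R
      \<and> exchangeable (length X) a b)"
  then obtain L a b R where "packed k X" "X = L @ a # b # R" "Y = L @ b # a # R"
    "exchangeable (length X) a b" by blast
  then show "move k X Y"
    unfolding move_def exchangeable_def
    by (intro conjI exI[of _ "length L"]) (simp_all add: nth_append list_update_append)
qed

lemma packed_cong: "set A = set B \<Longrightarrow> length A = length B \<Longrightarrow> packed k A \<longleftrightarrow> packed k B"
  unfolding packed_def by simp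

lemma packed_column:
  "packed k A \<Longrightarrow> c \<in> set A \<Longrightarrow>
     length c = length A \<and> (\<forall>x\<in>set c. x \<le> k) \<and> (\<exists>x\<in>set c. x \<noteq> 0)"
  unfolding packed_def by blast

lemma move_set_length: "move k A B \<Longrightarrow> set B = set A \<and> length B = length A"
  unfolding move_iff_swap by auto

lemma leM_refl [simp]: "leM k A A"
  unfolding leM_def by simp

lemma leM_trans: "leM k A B \<Longrightarrow> leM k B C \<Longrightarrow> leM k A C"
  unfolding leM_def by (rule rtranclp_trans)

lemma move_imp_leM: "move k A B \<Longrightarrow> leM k A B"
  unfolding leM_def by simp

lemma leM_set_length: "leM k A B \<Longrightarrow> set B = set A \<and> length B = length A"
  unfolding leM_def by (induction rule: rtranclp_induct) (auto dest: move_set_length)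

lemma leM_packed: "leM k A B \<Longrightarrow> packed k A \<Longrightarrow> packed k B"
  using packed_cong leM_set_length by metis

lemma packed_ov:
  assumes A: "packed k A" and B: "packed k B"
  shows "packed k (ov A B)"
proof -
  have "length c = length (ov A B) \<and> (\<forall>x\<in>set c. x \<le> k) \<and> (\<exists>x\<in>set c. x \<noteq> 0)"
    if "c \<in> set (ov A B)" for c
  proof -
    from that consider (upper) c0 where "c0 \<in> set A" "c = pad_below (length B) c0"
      | (lower) c0 where "c0 \<in> set B" "c = pad_above (length A) c0"
      unfolding ov_def by auto
    then show ?thesis
    proof cases
      case upper
      then show ?thesis using packed_column[OF A upper(1)] by (auto simp: ov_def pad_below_def)
    next
      case lower
      then show ?thesis using packed_column[OF B lower(1)] by (auto simp: ov_def pad_above_def)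
    qed
  qed
  moreover have "\<exists>c\<in>set (ov A B). c ! i \<noteq> 0" if i: "i < length (ov A B)" for i
  proof (cases "i < length A")
    case True
    then obtain c where "c \<in> set A" "c ! i \<noteq> 0"
      using A unfolding packed_def by blast
    moreover have "pad_below (length B) c ! i = c ! i"
      using True packed_column[OF A \<open>c \<in> set A\<close>] by (simp add: pad_below_def nth_append)
    moreover have "pad_below (length B) c \<in> set (ov A B)"
      using \<open>c \<in> set A\<close> by (simp add: ov_def)
    ultimately show ?thesis by (intro bexI[of _ "pad_below (length B) c"]) simp_all
  next
    case False
    moreover have "i - length A < length B"
      using i False by (simp add: ov_def)
    ultimately obtain c where "c \<in> set B" "c ! (i - length A) \<noteq> 0"
      using B unfolding packed_def by blast
    moreover have "pad_above (length A) c ! i = c ! (i - length A)"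
      using False by (simp add: pad_above_def nth_append)
    moreover have "pad_above (length A) c \<in> set (ov A B)"
      using \<open>c \<in> set B\<close> by (simp add: ov_def)
    ultimately show ?thesis by (intro bexI[of _ "pad_above (length A) c"]) simp_all
  qed
  ultimately show ?thesis unfolding packed_def by blast
qed

lemma packed_un: "packed k A \<Longrightarrow> packed k B \<Longrightarrow> packed k (un A B)"
  using packed_ov packed_cong[of "un A B" "ov A B"] by (auto simp: un_def ov_def)

lemma append_in_shuffles: "xs @ ys \<in> shuffles xs ys"
  by (induction xs) (auto intro: Cons_in_shuffles_leftI)

lemma shuffles_iff_filter:
  assumes "\<forall>x\<in>set xs. P x" "\<forall>y\<in>set ys. \<not> P y"
  shows "zs \<in> shuffles xs ys \<longleftrightarrow> filter P zs = xs \<and> filter (\<lambda>x. \<not> P x) zs = ys"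
proof
  assume "zs \<in> shuffles xs ys"
  then have "filter P zs \<in> shuffles (filter P xs) (filter P ys)"
    and "filter (\<lambda>x. \<not> P x) zs \<in> shuffles (filter (\<lambda>x. \<not> P x) xs) (filter (\<lambda>x. \<not> P x) ys)"
    using filter_shuffles by blast+
  then show "filter P zs = xs \<and> filter (\<lambda>x. \<not> P x) zs = ys"
    using assms by (simp add: filter_id_conv)
next
  assume "filter P zs = xs \<and> filter (\<lambda>x. \<not> P x) zs = ys"
  then show "zs \<in> shuffles xs ys" using partition_in_shuffles[of zs P] by simp
qed

lemma shuffles_adjacent_swap_cases [consumes 3]:
  assumes shuffle: "L @ a # b # R \<in> shuffles xs ys"
    and sep: "\<forall>x\<in>set xs. P x" "\<forall>y\<in>set ys. \<not> P y"
  obtains (left) xs1 xs2 where "xs = xs1 @ a # b # xs2"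
      "L @ b # a # R \<in> shuffles (xs1 @ b # a # xs2) ys"
    | (right) ys1 ys2 where "ys = ys1 @ a # b # ys2"
      "L @ b # a # R \<in> shuffles xs (ys1 @ b # a # ys2)"
    | (left_right) "a \<in> set xs" "b \<in> set ys" "L @ b # a # R \<in> shuffles xs ys"
    | (right_left) "a \<in> set ys" "b \<in> set xs" "L @ b # a # R \<in> shuffles xs ys"
proof -
  have xs: "xs = filter P (L @ a # b # R)" and ys: "ys = filter (\<lambda>x. \<not> P x) (L @ a # b # R)"
    using shuffle shuffles_iff_filter[OF sep] by auto
  have swapped: "L @ b # a # R \<in> shuffles (filter P (L @ b # a # R))
      (filter (\<lambda>x. \<not> P x) (L @ b # a # R))"
    by (rule partition_in_shuffles)
  consider "P a" "P b" | "\<not> P a" "\<not> P b" | "P a" "\<not> P b" | "\<not> P a" "P b" by blast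
  then show thesis
  proof cases
    case 1
    then show thesis using left[of "filter P L" "filter P R"] swapped xs ys by simp
  next
    case 2
    then show thesis using right[of "filter (\<lambda>x. \<not> P x) L" "filter (\<lambda>x. \<not> P x) R"] swapped xs ys
      by simp
  next
    case 3
    then show thesis using left_right swapped xs ys by simp
  next
    case 4
    then show thesis using right_left swapped xs ys by simp
  qed
qed

text \<open>Inside a shuffle of an \<open>n\<close>-column packed matrix with another one, this singles out
  the columns coming from the first block.\<close>
definition upper_nonzero :: "nat \<Rightarrow> nat list \<Rightarrow> bool" where
  "upper_nonzero n c \<longleftrightarrow> (\<exists>x\<in>set (take n c). x \<noteq> 0)"

lemma Sh_c_blocks_separated:
  assumes "packed k A"
  shows "\<forall>x\<in>set (map (pad_below (length B)) A). upper_nonzero (length A) x"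
    and "\<forall>y\<in>set (map (pad_above (length A)) B). \<not> upper_nonzero (length A) y"
  using packed_column[OF assms]
  by (auto simp: upper_nonzero_def pad_below_def pad_above_def)

lemma length_Sh_c: "X \<in> Sh_c A B \<Longrightarrow> length X = length A + length B"
  by (simp add: Sh_c_def length_shuffles)

lemma Sh_c_unique:
  assumes "packed k A" "packed k A'" "length A' = length A" "length B' = length B"
    and "X \<in> Sh_c A B" "X \<in> Sh_c A' B'"
  shows "A' = A \<and> B' = B"
proof -
  have "map (pad_below (length B)) A' = map (pad_below (length B)) A
      \<and> map (pad_above (length A)) B' = map (pad_above (length A)) B"
    using assms shuffles_iff_filter[OF Sh_c_blocks_separated[OF assms(1)]]
      shuffles_iff_filter[OF Sh_c_blocks_separated[OF assms(2)]]
    by (simp add: Sh_c_def)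
  moreover have "inj (pad_below n)" "inj (pad_above n)" for n
    by (simp_all add: inj_def pad_below_def pad_above_def)
  ultimately show ?thesis by (simp add: inj_map_eq_map)
qed

lemma Sh_c_adjacent_swap_cases:
  assumes "L @ a # b # R \<in> Sh_c A B" "packed k A"
  obtains (upper) A1 a0 b0 A2 where "A = A1 @ a0 # b0 # A2"
      "a = pad_below (length B) a0" "b = pad_below (length B) b0"
      "L @ b # a # R \<in> Sh_c (A1 @ b0 # a0 # A2) B"
    | (lower) B1 a0 b0 B2 where "B = B1 @ a0 # b0 # B2"
      "a = pad_above (length A) a0" "b = pad_above (length A) b0"
      "L @ b # a # R \<in> Sh_c A (B1 @ b0 # a0 # B2)"
    | (upper_lower) a0 b0 where "a0 \<in> set A" "b0 \<in> set B"
      "a = pad_below (length B) a0" "b = pad_above (length A) b0" "L @ b # a # R \<in> Sh_c A B"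
    | (lower_upper) a0 b0 where "a0 \<in> set B" "b0 \<in> set A"
      "a = pad_above (length A) a0" "b = pad_below (length B) b0" "L @ b # a # R \<in> Sh_c A B"
  using assms(1)[unfolded Sh_c_def] Sh_c_blocks_separated[OF assms(2)]
proof (cases rule: shuffles_adjacent_swap_cases)
  case (left xs1 xs2)
  then obtain A1 a0 b0 A2 where "A = A1 @ a0 # b0 # A2" "xs1 = map (pad_below (length B)) A1"
    "a = pad_below (length B) a0" "b = pad_below (length B) b0"
    "xs2 = map (pad_below (length B)) A2"
    by (auto simp: map_eq_append_conv Cons_eq_map_conv)
  with left show thesis using upper by (simp add: Sh_c_def)
next
  case (right ys1 ys2)
  then obtain B1 a0 b0 B2 where "B = B1 @ a0 # b0 # B2" "ys1 = map (pad_above (length A)) B1"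
    "a = pad_above (length A) a0" "b = pad_above (length A) b0"
    "ys2 = map (pad_above (length A)) B2"
    by (auto simp: map_eq_append_conv Cons_eq_map_conv)
  with right show thesis using lower by (simp add: Sh_c_def)
next
  case left_right
  then show thesis using upper_lower by (auto simp: Sh_c_def)
next
  case right_left
  then show thesis using lower_upper by (auto simp: Sh_c_def)
qed

lemma Sh_c_move_forward:
  assumes mv: "move k X Y" and X: "X \<in> Sh_c A B" and A: "packed k A" and B: "packed k B"
  obtains A' B' where "leM k A A'" "leM k B B'" "Y \<in> Sh_c A' B'"
proof -
  from mv obtain L a b R where XY: "X = L @ a # b # R" "Y = L @ b # a # R"
    and "exchangeable (length X) a b"
    unfolding move_iff_swap by blast
  then have exch: "exchangeable (length A + length B) a b"
    using length_Sh_c[OF X] by simp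
  from X[unfolded XY(1)] A show thesis
  proof (cases rule: Sh_c_adjacent_swap_cases)
    case (upper A1 a0 b0 A2)
    have "\<exists>x\<in>set b0. x \<noteq> 0"
      using packed_column[OF A, of b0] upper(1) by simp
    then have "exchangeable (length A) a0 b0"
      using exch exchangeable_pad_below_iff upper(2,3) by blast
    then have "move k A (A1 @ b0 # a0 # A2)"
      using A upper(1) by (auto simp: move_iff_swap)
    then show thesis using that[of "A1 @ b0 # a0 # A2" B] upper XY by (simp add: move_imp_leM)
  next
    case (lower B1 a0 b0 B2)
    have "\<exists>x\<in>set a0. x \<noteq> 0"
      using packed_column[OF B, of a0] lower(1) by simp
    then have "exchangeable (length B) a0 b0"
      using exch exchangeable_pad_above_iff lower(2,3) by blast
    then have "move k B (B1 @ b0 # a0 # B2)"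
      using B lower(1) by (auto simp: move_iff_swap)
    then show thesis using that[of A "B1 @ b0 # a0 # B2"] lower XY by (simp add: move_imp_leM)
  next
    case upper_lower
    then show thesis using that[of A B] XY by simp
  next
    case lower_upper
    then show thesis
      using exch not_exchangeable_pad_above_pad_below packed_column[OF A] packed_column[OF B]
      by (metis add.commute)
  qed
qed

lemma Sh_c_move_backward:
  assumes mv: "move k X Y" and Y: "Y \<in> Sh_c A B" and A: "packed k A" and B: "packed k B"
  obtains A' B' where "leM k A' A" "packed k A'" "leM k B' B" "packed k B'" "X \<in> Sh_c A' B'"
proof -
  from mv obtain L a b R where XY: "X = L @ a # b # R" "Y = L @ b # a # R"
    and "exchangeable (length X) a b"
    unfolding move_iff_swap by blast
  then have exch: "exchangeable (length A + length B) a b"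
    using length_Sh_c[OF Y] by simp
  from Y[unfolded XY(2)] A show thesis
  proof (cases rule: Sh_c_adjacent_swap_cases)
    case (upper A1 b0 a0 A2)
    let ?A' = "A1 @ a0 # b0 # A2"
    have A': "packed k ?A'"
      using A packed_cong[of ?A' A] upper(1) by auto
    have "\<exists>x\<in>set b0. x \<noteq> 0"
      using packed_column[OF A, of b0] upper(1) by simp
    then have "exchangeable (length A) a0 b0"
      using exch exchangeable_pad_below_iff upper(2,3) by blast
    then have "move k ?A' A"
      using A' upper(1) by (auto simp: move_iff_swap)
    then show thesis using that[of ?A' B] A' B upper XY by (simp add: move_imp_leM)
  next
    case (lower B1 b0 a0 B2)
    let ?B' = "B1 @ a0 # b0 # B2"
    have B': "packed k ?B'"
      using B packed_cong[of ?B' B] lower(1) by auto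
    have "\<exists>x\<in>set a0. x \<noteq> 0"
      using packed_column[OF B, of a0] lower(1) by simp
    then have "exchangeable (length B) a0 b0"
      using exch exchangeable_pad_above_iff lower(2,3) by blast
    then have "move k ?B' B"
      using B' lower(1) by (auto simp: move_iff_swap)
    then show thesis using that[of A ?B'] A B' lower XY by (simp add: move_imp_leM)
  next
    case upper_lower
    then show thesis
      using exch not_exchangeable_pad_above_pad_below packed_column[OF A] packed_column[OF B]
      by (metis add.commute)
  next
    case lower_upper
    then show thesis using that[of A B] A B XY by simp
  qed
qed

lemma move_map_in_context:
  assumes mv: "move k A A'" and packed: "packed k (P @ map f A @ S)"
    and exch: "\<And>a b. a \<in> set A \<Longrightarrow> b \<in> set A \<Longrightarrow> exchangeable (length A) a b \<Longrightarrow>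
      exchangeable (length (P @ map f A @ S)) (f a) (f b)"
  shows "move k (P @ map f A @ S) (P @ map f A' @ S)"
proof -
  from mv obtain L a b R where "A = L @ a # b # R" "A' = L @ b # a # R"
    "exchangeable (length A) a b"
    unfolding move_iff_swap by blast
  moreover have "P @ map f (L @ x # y # R) @ S = (P @ map f L) @ f x # f y # (map f R @ S)"
    for x y by simp
  ultimately show ?thesis
    using packed exch[of a b] unfolding move_iff_swap by (metis list.set_intros set_append Un_iff)
qed

lemma leM_map_in_context:
  assumes "leM k A A'" "packed k (P @ map f A @ S)"
    and "\<And>a b. a \<in> set A \<Longrightarrow> b \<in> set A \<Longrightarrow> exchangeable (length A) a b \<Longrightarrow>
      exchangeable (length (P @ map f A @ S)) (f a) (f b)"
  shows "leM k (P @ map f A @ S) (P @ map f A' @ S)"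
  using assms(1) unfolding leM_def
proof (induction rule: rtranclp_induct)
  case (step A' A'')
  have "set A' = set A" "length A' = length A"
    using step(1) leM_set_length unfolding leM_def by blast+
  moreover have "packed k (P @ map f A' @ S)"
    using assms(2) packed_cong[of "P @ map f A' @ S" "P @ map f A @ S"] calculation by simp
  ultimately have "move k (P @ map f A' @ S) (P @ map f A'' @ S)"
    using move_map_in_context[OF step(2)] assms(3) by simp
  then show ?case using step(3) by simp
qed simp

lemma leM_ov_mono:
  assumes "leM k M1 A" "leM k M2 B" and M1: "packed k M1" and M2: "packed k M2"
  shows "leM k (ov M1 M2) (ov A B)"
proof -
  have len: "length A = length M1" "length B = length M2"
    using assms(1,2) leM_set_length by blast+
  have A: "packed k A" using assms(1) M1 by (rule leM_packed)
  have "exchangeable (length (ov M1 M2)) (pad_below (length M2) a) (pad_below (length M2) b)"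
    if "a \<in> set M1" "b \<in> set M1" "exchangeable (length M1) a b" for a b
    using that packed_column[OF M1] exchangeable_pad_below_iff by (simp add: ov_def)
  then have "leM k (ov M1 M2) (ov A M2)"
    using leM_map_in_context[of k M1 A "[]" "pad_below (length M2)" "map (pad_above (length M1)) M2"]
      assms(1) packed_ov[OF M1 M2] len by (simp add: ov_def)
  moreover have "exchangeable (length (ov A M2)) (pad_above (length A) a) (pad_above (length A) b)"
    if "a \<in> set M2" "b \<in> set M2" "exchangeable (length M2) a b" for a b
    using that packed_column[OF M2] exchangeable_pad_above_iff by (simp add: ov_def)
  then have "leM k (ov A M2) (ov A B)"
    using leM_map_in_context[of k M2 B "map (pad_below (length M2)) A" "pad_above (length A)" "[]"]
      assms(2) packed_ov[OF A M2] len by (simp add: ov_def)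
  ultimately show ?thesis by (rule leM_trans)
qed

lemma leM_un_mono:
  assumes "leM k A M1" "leM k B M2" and A: "packed k A" and B: "packed k B"
  shows "leM k (un A B) (un M1 M2)"
proof -
  have len: "length M1 = length A" "length M2 = length B"
    using assms(1,2) leM_set_length by blast+
  have M1: "packed k M1" using assms(1) A by (rule leM_packed)
  have "exchangeable (length (un A B)) (pad_below (length B) a) (pad_below (length B) b)"
    if "a \<in> set A" "b \<in> set A" "exchangeable (length A) a b" for a b
    using that packed_column[OF A] exchangeable_pad_below_iff by (simp add: un_def add.commute)
  then have "leM k (un A B) (un M1 B)"
    using leM_map_in_context[of k A M1 "map (pad_above (length A)) B" "pad_below (length B)" "[]"]
      assms(1) packed_un[OF A B] len by (simp add: un_def)
  moreover have "exchangeable (length (un M1 B)) (pad_above (length M1) a) (pad_above (length M1) b)"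
    if "a \<in> set B" "b \<in> set B" "exchangeable (length B) a b" for a b
    using that packed_column[OF B] exchangeable_pad_above_iff[of a "length M1" "length B" b]
    by (simp add: un_def add.commute)
  then have "leM k (un M1 B) (un M1 M2)"
    using leM_map_in_context[of k B M2 "[]" "pad_above (length M1)" "map (pad_below (length B)) M1"]
      assms(2) packed_un[OF M1 B] len by (simp add: un_def)
  ultimately show ?thesis by (rule leM_trans)
qed

lemma leM_bubble_left:
  "packed k (L @ xs @ y # R) \<Longrightarrow> \<forall>x\<in>set xs. exchangeable (length (L @ xs @ y # R)) x y \<Longrightarrow>
    leM k (L @ xs @ y # R) (L @ y # xs @ R)"
proof (induction xs arbitrary: L)
  case (Cons x xs)
  have "leM k (L @ x # xs @ y # R) (L @ x # y # xs @ R)"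
    using Cons.IH[of "L @ [x]"] Cons.prems by simp
  moreover have "packed k (L @ x # y # xs @ R)"
    using Cons.prems(1) packed_cong[of "L @ x # y # xs @ R" "L @ (x # xs) @ y # R"] by auto
  then have "move k (L @ x # y # xs @ R) (L @ y # x # xs @ R)"
    using Cons.prems(2) unfolding move_iff_swap by fastforce
  ultimately show ?case by (auto intro: leM_trans move_imp_leM)
qed simp

lemma leM_bubble_right:
  "packed k (L @ y # xs @ R) \<Longrightarrow> \<forall>x\<in>set xs. exchangeable (length (L @ y # xs @ R)) y x \<Longrightarrow>
    leM k (L @ y # xs @ R) (L @ xs @ y # R)"
proof (induction xs arbitrary: L)
  case (Cons x xs)
  have "move k (L @ y # x # xs @ R) (L @ x # y # xs @ R)"
    using Cons.prems unfolding move_iff_swap by fastforce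
  moreover have "packed k (L @ x # y # xs @ R)"
    using Cons.prems(1) packed_cong[of "L @ x # y # xs @ R" "L @ y # (x # xs) @ R"] by auto
  then have "leM k (L @ x # y # xs @ R) (L @ x # xs @ y # R)"
    using Cons.IH[of "L @ [x]"] Cons.prems by simp
  ultimately show ?case by (auto intro: leM_trans move_imp_leM)
qed simp

lemma leM_append_shuffle:
  "zs \<in> shuffles xs ys \<Longrightarrow> packed k (L @ xs @ ys) \<Longrightarrow>
    \<forall>x\<in>set xs. \<forall>y\<in>set ys. exchangeable (length (L @ xs @ ys)) x y \<Longrightarrow>
    leM k (L @ xs @ ys) (L @ zs)"
proof (induction xs ys arbitrary: L zs rule: shuffles.induct)
  case (3 x xs y ys)
  from "3.prems"(1) consider (left) zs' where "zs = x # zs'" "zs' \<in> shuffles xs (y # ys)"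
    | (right) zs' where "zs = y # zs'" "zs' \<in> shuffles (x # xs) ys"
    by auto
  then show ?case
  proof cases
    case left
    then show ?thesis using "3.IH"(1)[OF left(2), of "L @ [x]"] "3.prems" by simp
  next
    case right
    have "leM k (L @ (x # xs) @ y # ys) (L @ y # (x # xs) @ ys)"
      using "3.prems" by (intro leM_bubble_left) auto
    moreover have "packed k ((L @ [y]) @ (x # xs) @ ys)"
      using "3.prems"(2) packed_cong[of "(L @ [y]) @ (x # xs) @ ys" "L @ (x # xs) @ y # ys"]
      by auto
    then have "leM k ((L @ [y]) @ (x # xs) @ ys) ((L @ [y]) @ zs')"
      using "3.IH"(2)[OF right(2), of "L @ [y]"] "3.prems" by simp
    ultimately show ?thesis using right by (auto intro: leM_trans)
  qed
qed simp_all

lemma leM_shuffle_append: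
  "zs \<in> shuffles xs ys \<Longrightarrow> packed k (L @ xs @ ys) \<Longrightarrow>
    \<forall>x\<in>set xs. \<forall>y\<in>set ys. exchangeable (length (L @ xs @ ys)) x y \<Longrightarrow>
    leM k (L @ zs) (L @ ys @ xs)"
proof (induction xs ys arbitrary: L zs rule: shuffles.induct)
  case (3 x xs y ys)
  from "3.prems"(1) consider (left) zs' where "zs = x # zs'" "zs' \<in> shuffles xs (y # ys)"
    | (right) zs' where "zs = y # zs'" "zs' \<in> shuffles (x # xs) ys"
    by auto
  then show ?case
  proof cases
    case left
    have "leM k ((L @ [x]) @ zs') ((L @ [x]) @ (y # ys) @ xs)"
      using "3.IH"(1)[OF left(2), of "L @ [x]"] "3.prems" by simp
    moreover have "packed k (L @ x # (y # ys) @ xs)"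
      using "3.prems"(2) packed_cong[of "L @ x # (y # ys) @ xs" "L @ (x # xs) @ y # ys"] by auto
    then have "leM k (L @ x # (y # ys) @ xs) (L @ (y # ys) @ x # xs)"
      using "3.prems" by (intro leM_bubble_right) (auto simp: ac_simps)
    ultimately show ?thesis using left by (auto intro: leM_trans)
  next
    case right
    have "packed k ((L @ [y]) @ (x # xs) @ ys)"
      using "3.prems"(2) packed_cong[of "(L @ [y]) @ (x # xs) @ ys" "L @ (x # xs) @ y # ys"]
      by auto
    then show ?thesis using "3.IH"(2)[OF right(2), of "L @ [y]"] "3.prems" right by simp
  qed
qed simp_all

lemma ov_in_Sh_c: "ov A B \<in> Sh_c A B"
  by (simp add: ov_def Sh_c_def append_in_shuffles)

lemma un_in_Sh_c: "un A B \<in> Sh_c A B"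
  by (simp add: un_def Sh_c_def shuffles_commutes[of "map (pad_below (length B)) A"]
      append_in_shuffles)

lemma packed_Sh_c: "X \<in> Sh_c A B \<Longrightarrow> packed k A \<Longrightarrow> packed k B \<Longrightarrow> packed k X"
  using packed_ov packed_cong[of X "ov A B"]
  by (simp add: Sh_c_def ov_def set_shuffles length_shuffles)

lemma leM_ov_iff:
  assumes M1: "packed k M1" and M2: "packed k M2"
  shows "leM k (ov M1 M2) X \<longleftrightarrow> (\<exists>A B. leM k M1 A \<and> leM k M2 B \<and> X \<in> Sh_c A B)"
proof
  assume "leM k (ov M1 M2) X"
  then have "(move k)\<^sup>*\<^sup>* (ov M1 M2) X" by (simp only: leM_def)
  then show "\<exists>A B. leM k M1 A \<and> leM k M2 B \<and> X \<in> Sh_c A B"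
  proof (induction rule: rtranclp_induct)
    case base
    show ?case using ov_in_Sh_c leM_refl by blast
  next
    case (step Y Z)
    then obtain A B where AB: "leM k M1 A" "leM k M2 B" "Y \<in> Sh_c A B" by blast
    obtain A' B' where "leM k A A'" "leM k B B'" "Z \<in> Sh_c A' B'"
      using Sh_c_move_forward[OF step(2) AB(3) leM_packed[OF AB(1) M1] leM_packed[OF AB(2) M2]] .
    then show ?case using AB leM_trans by blast
  qed
next
  assume "\<exists>A B. leM k M1 A \<and> leM k M2 B \<and> X \<in> Sh_c A B"
  then obtain A B where AB: "leM k M1 A" "leM k M2 B" "X \<in> Sh_c A B" by blast
  have A: "packed k A" and B: "packed k B"
    using leM_packed AB M1 M2 by blast+
  have "leM k (ov M1 M2) (ov A B)"
    using AB(1,2) M1 M2 by (rule leM_ov_mono)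
  moreover have "leM k (ov A B) X"
    using leM_append_shuffle[OF AB(3)[unfolded Sh_c_def], of k "[]"] packed_ov[OF A B]
    by (simp add: ov_def exchangeable_pad_below_pad_above)
  ultimately show "leM k (ov M1 M2) X" using leM_trans by simp
qed

lemma leM_un_iff:
  assumes M1: "packed k M1" and M2: "packed k M2"
  shows "leM k X (un M1 M2) \<and> packed k X \<longleftrightarrow>
    (\<exists>A B. leM k A M1 \<and> packed k A \<and> leM k B M2 \<and> packed k B \<and> X \<in> Sh_c A B)"
proof
  assume "leM k X (un M1 M2) \<and> packed k X"
  then have "(move k)\<^sup>*\<^sup>* X (un M1 M2)" by (simp only: leM_def)
  then show "\<exists>A B. leM k A M1 \<and> packed k A \<and> leM k B M2 \<and> packed k B \<and> X \<in> Sh_c A B"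
  proof (induction rule: converse_rtranclp_induct)
    case base
    show ?case using un_in_Sh_c leM_refl M1 M2 by blast
  next
    case (step Y Z)
    then obtain A B where AB: "leM k A M1" "packed k A" "leM k B M2" "packed k B" "Z \<in> Sh_c A B"
      by blast
    obtain A' B' where "leM k A' A" "packed k A'" "leM k B' B" "packed k B'" "Y \<in> Sh_c A' B'"
      using Sh_c_move_backward[OF step(1) AB(5,2,4)] .
    then show ?case using AB leM_trans by blast
  qed
next
  assume "\<exists>A B. leM k A M1 \<and> packed k A \<and> leM k B M2 \<and> packed k B \<and> X \<in> Sh_c A B"
  then obtain A B where AB: "leM k A M1" "leM k B M2" "X \<in> Sh_c A B"
    and A: "packed k A" and B: "packed k B" by blast
  have "leM k X (un A B)"
    using leM_shuffle_append[OF AB(3)[unfolded Sh_c_def], of k "[]"] packed_ov[OF A B]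
    by (simp add: ov_def un_def exchangeable_pad_below_pad_above)
  moreover have "leM k (un A B) (un M1 M2)"
    using AB(1,2) A B by (rule leM_un_mono)
  ultimately show "leM k X (un M1 M2) \<and> packed k X"
    using leM_trans packed_Sh_c[OF AB(3) A B] by simp
qed

lemma sum_F_eq_of_bool: "finite S \<Longrightarrow> (\<Sum>M\<in>S. F M X) = of_bool (X \<in> S)"
  by (simp add: F_def)

lemma finite_leM_above: "finite {M'. leM k M M'}"
  by (rule finite_subset[OF _ finite_lists_length_eq[of "set M" "length M"]])
    (auto dest: leM_set_length)

lemma finite_leM_below: "finite {M'. leM k M' M \<and> packed k M'}"
  by (rule finite_subset[OF _ finite_lists_length_eq[of "set M" "length M"]])
    (auto dest: leM_set_length)

lemma E_eq_of_bool: "E k M = (\<lambda>X. of_bool (X \<in> {M'. leM k M M'}))"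
  by (simp add: E_def sum_F_eq_of_bool finite_leM_above)

lemma H_eq_of_bool: "H k M = (\<lambda>X. of_bool (X \<in> {M'. leM k M' M \<and> packed k M'}))"
  by (simp add: H_def sum_F_eq_of_bool finite_leM_below)

lemma pm_mult_of_bool:
  fixes S1 S2 :: "pmat set"
  assumes "finite S1" "finite S2"
    and unique: "\<And>A B A' B'. A \<in> S1 \<Longrightarrow> B \<in> S2 \<Longrightarrow> A' \<in> S1 \<Longrightarrow> B' \<in> S2 \<Longrightarrow>
      X \<in> Sh_c A B \<Longrightarrow> X \<in> Sh_c A' B' \<Longrightarrow> A' = A \<and> B' = B"
  shows "pm_mult (\<lambda>A. of_bool (A \<in> S1)) (\<lambda>B. of_bool (B \<in> S2)) X
    = (of_bool (\<exists>A\<in>S1. \<exists>B\<in>S2. X \<in> Sh_c A B) :: 'a::comm_ring_1)"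
proof (cases "(1::'a) = 0")
  case True
  then show ?thesis by (simp add: pm_mult_def)
next
  case False
  then have "{(A, B). of_bool (A \<in> S1) \<noteq> (0::'a) \<and> of_bool (B \<in> S2) \<noteq> (0::'a)} = S1 \<times> S2"
    by auto
  moreover have "finite (Sh_c A B)" for A B
    by (simp add: Sh_c_def)
  ultimately have "pm_mult (\<lambda>A. of_bool (A \<in> S1)) (\<lambda>B. of_bool (B \<in> S2)) X
      = (\<Sum>p\<in>S1 \<times> S2. of_bool (X \<in> Sh_c (fst p) (snd p)) :: 'a)"
    unfolding pm_mult_def by (intro sum.cong) (auto simp: sum_F_eq_of_bool)
  also have "\<dots> = of_nat (card (S1 \<times> S2 \<inter> {p. X \<in> Sh_c (fst p) (snd p)}))"
    using assms(1,2) by simp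
  also have "\<dots> = of_bool (\<exists>A\<in>S1. \<exists>B\<in>S2. X \<in> Sh_c A B)"
  proof (cases "\<exists>A\<in>S1. \<exists>B\<in>S2. X \<in> Sh_c A B")
    case True
    then obtain A B where "A \<in> S1" "B \<in> S2" "X \<in> Sh_c A B" by blast
    then have "S1 \<times> S2 \<inter> {p. X \<in> Sh_c (fst p) (snd p)} = {(A, B)}"
      using unique by fastforce
    then show ?thesis using True by simp
  next
    case False
    then have "S1 \<times> S2 \<inter> {p. X \<in> Sh_c (fst p) (snd p)} = {}" by auto
    then show ?thesis using False by simp
  qed
  finally show ?thesis .
qed

lemma E_mult:
  assumes M1: "packed k M1" and M2: "packed k M2"
  shows "pm_mult (E k M1) (E k M2) = (E k (ov M1 M2) :: pmat \<Rightarrow> 'a::comm_ring_1)"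
proof
  fix X
  have "pm_mult (E k M1) (E k M2) X
      = (of_bool (\<exists>A\<in>{M'. leM k M1 M'}. \<exists>B\<in>{M'. leM k M2 M'}. X \<in> Sh_c A B) :: 'a)"
    unfolding E_eq_of_bool
  proof (rule pm_mult_of_bool[OF finite_leM_above finite_leM_above])
    fix A B A' B'
    assume "A \<in> {M'. leM k M1 M'}" "B \<in> {M'. leM k M2 M'}" "A' \<in> {M'. leM k M1 M'}"
      "B' \<in> {M'. leM k M2 M'}" "X \<in> Sh_c A B" "X \<in> Sh_c A' B'"
    then have "leM k M1 A" "leM k M1 A'" "leM k M2 B" "leM k M2 B'" "X \<in> Sh_c A B" "X \<in> Sh_c A' B'"
      by simp_all
    moreover from this have "length A' = length A" "length B' = length B"
      using leM_set_length by metis+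
    ultimately show "A' = A \<and> B' = B"
      using Sh_c_unique leM_packed M1 by blast
  qed
  also have "\<dots> = E k (ov M1 M2) X"
    unfolding E_eq_of_bool using leM_ov_iff[OF M1 M2, of X] by simp
  finally show "pm_mult (E k M1) (E k M2) X = (E k (ov M1 M2) X :: 'a)" .
qed

lemma H_mult:
  assumes M1: "packed k M1" and M2: "packed k M2"
  shows "pm_mult (H k M1) (H k M2) = (H k (un M1 M2) :: pmat \<Rightarrow> 'a::comm_ring_1)"
proof
  fix X
  have "pm_mult (H k M1) (H k M2) X
      = (of_bool (\<exists>A\<in>{M'. leM k M' M1 \<and> packed k M'}. \<exists>B\<in>{M'. leM k M' M2 \<and> packed k M'}.
           X \<in> Sh_c A B) :: 'a)"
    unfolding H_eq_of_bool
  proof (rule pm_mult_of_bool[OF finite_leM_below finite_leM_below])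
    fix A B A' B'
    assume "A \<in> {M'. leM k M' M1 \<and> packed k M'}" "B \<in> {M'. leM k M' M2 \<and> packed k M'}"
      "A' \<in> {M'. leM k M' M1 \<and> packed k M'}" "B' \<in> {M'. leM k M' M2 \<and> packed k M'}"
      "X \<in> Sh_c A B" "X \<in> Sh_c A' B'"
    then have "leM k A M1" "leM k A' M1" "leM k B M2" "leM k B' M2" "packed k A" "packed k A'"
      "X \<in> Sh_c A B" "X \<in> Sh_c A' B'"
      by simp_all
    moreover from this have "length A' = length A" "length B' = length B"
      using leM_set_length by metis+
    ultimately show "A' = A \<and> B' = B"
      using Sh_c_unique by blast
  qed
  also have "\<dots> = H k (un M1 M2) X"
    unfolding H_eq_of_bool using leM_un_iff[OF M1 M2, of X] by auto
  finally show "pm_mult (H k M1) (H k M2) X = (H k (un M1 M2) X :: 'a)" .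
qed

theorem proposition2p3:
  fixes k :: nat and M1 M2 :: pmat
  assumes "k \<ge> 1" and "packed k M1" and "packed k M2"
  shows "pm_mult (E k M1) (E k M2) = (E k (ov M1 M2) :: pmat \<Rightarrow> 'a::comm_ring_1)
       \<and> pm_mult (H k M1) (H k M2) = (H k (un M1 M2) :: pmat \<Rightarrow> 'a)"
  using E_mult H_mult assms(2,3) by blast

end
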